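(* Let $f:\{0,1\}^n\to\{0,1\}$, let $\delta>0$, let $a,b$ be non-negative integers, $\alpha_0\in[0,1)$, $\beta_0,\alpha_1,\beta_1\ge0$, and let $\mu$ be a bit-wise product distribution on $\{0,1\}^n$ that is $(\alpha_0,\beta_0,\alpha_1,\beta_1,a,b)$-feasible for $f$. Then there is a deterministic decision tree for $f$ of depth at most $ab$ whose error probability under $\mu$ is at most $$\frac14+\alpha_1+\beta_1+4b(\beta_1+\delta)+\frac{\beta_0}{(1-\alpha_0)\delta}.$$
   Context: $\mu$ is bit-wise product if $\mu(x)=\prod_i p_i(x_i)$ with $p_i(0)+p_i(1)=1$. A subcube with support $s\in\{0,1,\star\}^n$ is $\{x: s_i\ne\star\Rightarrow x_i=s_i\}$; its support size is $|\{i:s_i\in\{0,1\}\}|$. For $A\subseteq\{0,1\}^n$, $\mu_z(A)=\mu(A\cap f^{-1}(z))$, $\mu_z=\mu_z(\{0,1\}^n)$. $\mu$ is $(\alpha_0,\beta_0,\alpha_1,\beta_1,a,b)$-feasible for $f$ if there exist $u_R\ge0$ indexed by subcubes $R$ of support size at most $a$ and $w_R\ge0$ indexed by subcubes $R$ of support size at most $b$ with: $\sum_{R\ni x}u_R\ge1-\alpha_0$ for all $x\in f^{-1}(0)$; $\sum_{R\ni x}u_R\le\beta_0$ for all $x\in f^{-1}(1)$; $\sum_R\mu_1(R)w_R\ge(1-\alpha_1)\mu_1$; $\sum_{R\ni x}w_R\le1$ for all $x$; $\sum_{R\ni x}w_R\le\beta_1$ for all $x\in f^{-1}(0)$. Convention: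 if $p_i(0)\in\{0,1\}$ (bit $i$ fixed under $\mu$), then $i$ is not in the support of any $R$ used in the feasible solution. *)

theory Defs
  imports Complex_Main
begin

text \<open>Points of the Boolean cube {0,1}^n are bool lists of length n (True = 1).
  A bit-wise product distribution is given by p :: nat => real, where p i is the
  probability that bit i equals 1 (so p_i(1) = p i, p_i(0) = 1 - p i).\<close>

definition cube :: "nat \<Rightarrow> bool list set" where
  "cube n = {x. length x = n}"

definition prod_dist :: "nat \<Rightarrow> (nat \<Rightarrow> real) \<Rightarrow> bool"
  where "prod_dist n p \<longleftrightarrow> (\<forall>i<n. 0 \<le> p i \<and> p i \<le> 1)"

definition mu_pt :: "nat \<Rightarrow> (nat \<Rightarrow> real) \<Rightarrow> bool list \<Rightarrow> real" where
  "mu_pt n p x = (\<Prod>i<n. if x ! i then p i else 1 - p i)"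

definition mu :: "nat \<Rightarrow> (nat \<Rightarrow> real) \<Rightarrow> bool list set \<Rightarrow> real" where
  "mu n p A = (\<Sum>x\<in>A \<inter> cube n. mu_pt n p x)"

definition mu_z :: "nat \<Rightarrow> (nat \<Rightarrow> real) \<Rightarrow> (bool list \<Rightarrow> bool) \<Rightarrow> bool \<Rightarrow> bool list set \<Rightarrow> real" where
  "mu_z n p f z A = mu n p (A \<inter> {x. f x = z})"

text \<open>Subcube supports s in {0,1,*}^n: None = *, Some b = fixed bit b.\<close>
definition supports :: "nat \<Rightarrow> bool option list set" where
  "supports n = {s. length s = n}"

definition subcube :: "nat \<Rightarrow> bool option list \<Rightarrow> bool list set" where
  "subcube n s = {x \<in> cube n. \<forall>i<n. s ! i \<noteq> None \<longrightarrow> x ! i = the (s ! i)}"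

definition supp_size :: "nat \<Rightarrow> bool option list \<Rightarrow> nat" where
  "supp_size n s = card {i. i < n \<and> s ! i \<noteq> None}"

definition fixed_bit :: "(nat \<Rightarrow> real) \<Rightarrow> nat \<Rightarrow> bool" where
  "fixed_bit p i \<longleftrightarrow> (1 - p i = 0 \<or> 1 - p i = 1)"

definition feasible ::
  "nat \<Rightarrow> (nat \<Rightarrow> real) \<Rightarrow> (bool list \<Rightarrow> bool) \<Rightarrow> real \<Rightarrow> real \<Rightarrow> real \<Rightarrow> real \<Rightarrow> nat \<Rightarrow> nat \<Rightarrow> bool"
where
  "feasible n p f \<alpha>0 \<beta>0 \<alpha>1 \<beta>1 a b \<longleftrightarrow>
    (\<exists>u w :: bool option list \<Rightarrow> real.
       (\<forall>s\<in>supports n. 0 \<le> u s \<and> 0 \<le> w s) \<and>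
       (\<forall>s\<in>supports n. u s \<noteq> 0 \<longrightarrow> supp_size n s \<le> a) \<and>
       (\<forall>s\<in>supports n. w s \<noteq> 0 \<longrightarrow> supp_size n s \<le> b) \<and>
       (\<forall>s\<in>supports n. \<forall>i<n. fixed_bit p i \<and> s ! i \<noteq> None \<longrightarrow> u s = 0 \<and> w s = 0) \<and>
       (\<forall>x\<in>cube n. \<not> f x \<longrightarrow>
          (\<Sum>s\<in>{s\<in>supports n. x \<in> subcube n s}. u s) \<ge> 1 - \<alpha>0) \<and>
       (\<forall>x\<in>cube n. f x \<longrightarrow>
          (\<Sum>s\<in>{s\<in>supports n. x \<in> subcube n s}. u s) \<le> \<beta>0) \<and>
       (\<Sum>s\<in>supports n. mu_z n p f True (subcube n s) * w s)
          \<ge> (1 - \<alpha>1) * mu_z n p f True (cube n) \<and>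
       (\<forall>x\<in>cube n. (\<Sum>s\<in>{s\<in>supports n. x \<in> subcube n s}. w s) \<le> 1) \<and>
       (\<forall>x\<in>cube n. \<not> f x \<longrightarrow>
          (\<Sum>s\<in>{s\<in>supports n. x \<in> subcube n s}. w s) \<le> \<beta>1))"

datatype dtree = Leaf bool | Node nat dtree dtree

fun dt_eval :: "dtree \<Rightarrow> bool list \<Rightarrow> bool" where
  "dt_eval (Leaf c) x = c"
| "dt_eval (Node i l r) x = (if x ! i then dt_eval r x else dt_eval l x)"

fun dt_depth :: "dtree \<Rightarrow> nat" where
  "dt_depth (Leaf c) = 0"
| "dt_depth (Node i l r) = Suc (max (dt_depth l) (dt_depth r))"

fun dt_vars :: "dtree \<Rightarrow> nat set" where
  "dt_vars (Leaf c) = {}"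
| "dt_vars (Node i l r) = insert i (dt_vars l \<union> dt_vars r)"

definition dt_error :: "nat \<Rightarrow> (nat \<Rightarrow> real) \<Rightarrow> (bool list \<Rightarrow> bool) \<Rightarrow> dtree \<Rightarrow> real" where
  "dt_error n p f T = mu n p {x. dt_eval T x \<noteq> f x}"

end

theory Submission
  imports Defs
begin

text \<open>
  Restrictions \<rho> (subcubes) are charged a potential, and the tree is built by induction on
  the number k of remaining rounds. If the 0-inputs of \<rho> carry at most a \<theta>-fraction of \<mu>(\<rho>),
  a 1-leaf is cheap. Otherwise, averaging over the 0-certificates R with weights u R \<mu>(\<rho> \<inter> R)
  finds one consistent with \<rho> whose consistent 1-certificates carry w-mass at most
  (\<beta>1 + \<beta>0 / ((1 - \<alpha>0) \<theta>)) \<mu>(\<rho>); this uses the bounds on the u- and w-covers and the fact that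
  under a product measure consistent subcubes are positively correlated. Querying the at most a
  bits of R fixes a bit of every inconsistent 1-certificate meeting \<rho>, so after b rounds every
  1-certificate is settled, i.e. contains all of \<rho> or none of it. Then at a 0-input of \<rho> the
  w-weight is at most \<beta>1, so a 0-leaf errs only on w-uncovered 1-inputs and on \<beta>1 \<mu>(\<rho>).
  Choosing \<theta> = 1/4 + b \<delta> gives the bound.
\<close>

section \<open>Subcubes and restrictions\<close>

lemma finite_cube: "finite (cube n)"
  using finite_lists_length_eq[of "UNIV :: bool set" n] by (simp add: cube_def)

lemma finite_supports: "finite (supports n)"
  using finite_lists_length_eq[of "UNIV :: bool option set" n] by (simp add: supports_def)

lemma subcube_subset_cube: "subcube n \<rho> \<subseteq> cube n"
  by (auto simp: subcube_def)

lemma finite_subcube: "finite (subcube n \<rho>)"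
  using finite_subset[OF subcube_subset_cube finite_cube] .

definition admits :: "bool option \<Rightarrow> bool \<Rightarrow> bool" where
  "admits c v \<longleftrightarrow> c = None \<or> c = Some v"

lemma mem_subcube_iff:
  "x \<in> subcube n \<rho> \<longleftrightarrow> x \<in> cube n \<and> (\<forall>i<n. admits (\<rho> ! i) (x ! i))"
proof -
  have "(\<rho> ! i \<noteq> None \<longrightarrow> x ! i = the (\<rho> ! i)) \<longleftrightarrow> admits (\<rho> ! i) (x ! i)" for i
    by (cases "\<rho> ! i") (auto simp: admits_def)
  then show ?thesis by (simp add: subcube_def)
qed

lemma subcube_replicate_None: "subcube n (replicate n None) = cube n"
  by (auto simp: mem_subcube_iff admits_def)

lemma subcube_fix_bit:
  assumes "i < length \<rho>" "i < n" "\<rho> ! i = None"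
  shows "subcube n (\<rho>[i := Some v]) = {x \<in> subcube n \<rho>. x ! i = v}"
proof -
  have "(\<forall>j<n. admits (\<rho>[i := Some v] ! j) (x ! j))
      \<longleftrightarrow> x ! i = v \<and> (\<forall>j<n. admits (\<rho> ! j) (x ! j))" for x
  proof -
    have "admits (\<rho>[i := Some v] ! j) (x ! j) \<longleftrightarrow> (if j = i then x ! i = v else admits (\<rho> ! j) (x ! j))"
      for j using assms(1) by (auto simp: admits_def)
    moreover have "admits (\<rho> ! i) (x ! i)"
      using assms(3) by (simp add: admits_def)
    ultimately show ?thesis
      using assms(2) by auto
  qed
  then show ?thesis
    by (auto simp: mem_subcube_iff)
qed

lemma sum_subcube_split:
  assumes "i < length \<rho>" "i < n" "\<rho> ! i = None"
  shows "(\<Sum>x\<in>subcube n \<rho>. h x)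
    = (\<Sum>x\<in>subcube n (\<rho>[i := Some False]). h x) + (\<Sum>x\<in>subcube n (\<rho>[i := Some True]). h x)"
proof -
  have "subcube n \<rho> = subcube n (\<rho>[i := Some False]) \<union> subcube n (\<rho>[i := Some True])"
    using assms by (auto simp: subcube_fix_bit)
  moreover have "subcube n (\<rho>[i := Some False]) \<inter> subcube n (\<rho>[i := Some True]) = {}"
    using assms by (auto simp: subcube_fix_bit)
  ultimately show ?thesis
    by (simp add: sum.union_disjoint finite_subcube)
qed

definition consistent :: "nat \<Rightarrow> bool option list \<Rightarrow> bool option list \<Rightarrow> bool" where
  "consistent n R s \<longleftrightarrow> (\<forall>i<n. R ! i \<noteq> None \<longrightarrow> s ! i \<noteq> None \<longrightarrow> R ! i = s ! i)"

definition unset_bits :: "nat \<Rightarrow> bool option list \<Rightarrow> bool option list \<Rightarrow> nat" where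
  "unset_bits n \<rho> s = card {i. i < n \<and> s ! i \<noteq> None \<and> \<rho> ! i = None}"

lemma unset_bits_fix_bit:
  assumes "i < length \<rho>" "i < n" "\<rho> ! i = None"
  shows "unset_bits n (\<rho>[i := Some v]) s = unset_bits n \<rho> s - of_bool (s ! i \<noteq> None)"
proof -
  have "{j. j < n \<and> s ! j \<noteq> None \<and> \<rho>[i := Some v] ! j = None}
      = {j. j < n \<and> s ! j \<noteq> None \<and> \<rho> ! j = None} - {i}"
    using assms by (auto simp: nth_list_update)
  then show ?thesis
    using assms by (simp add: unset_bits_def card_Diff_singleton_if)
qed

lemma unset_bits_pos:
  assumes "i < n" "s ! i \<noteq> None" "\<rho> ! i = None"
  shows "0 < unset_bits n \<rho> s"
  unfolding unset_bits_def using assms by (subst card_gt_0_iff) auto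

lemma unset_bits_le_supp_size: "unset_bits n \<rho> s \<le> supp_size n s"
  unfolding unset_bits_def supp_size_def by (rule card_mono) auto

lemma unset_bits_replicate_None: "unset_bits n (replicate n None) s = supp_size n s"
  unfolding unset_bits_def supp_size_def by (metis (lifting) nth_replicate)

lemma unset_bits_eq_0_iff:
  "unset_bits n \<rho> s = 0 \<longleftrightarrow> (\<forall>i<n. s ! i \<noteq> None \<longrightarrow> \<rho> ! i \<noteq> None)"
  unfolding unset_bits_def by auto

lemma mem_subcube_if_settled:
  assumes "unset_bits n \<rho> s = 0" "y \<in> subcube n \<rho>" "z \<in> subcube n \<rho>" "y \<in> subcube n s"
  shows "z \<in> subcube n s"
proof -
  have "admits (s ! i) (z ! i)" if i: "i < n" for i
  proof (cases "s ! i")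
    case (Some c)
    then obtain d where "\<rho> ! i = Some d"
      using assms(1) i by (auto simp: unset_bits_eq_0_iff)
    moreover have "admits (\<rho> ! i) (y ! i)" "admits (\<rho> ! i) (z ! i)" "admits (s ! i) (y ! i)"
      using assms(2-4) i by (auto simp: mem_subcube_iff)
    ultimately show ?thesis
      using Some by (simp add: admits_def)
  qed (simp add: admits_def)
  then show ?thesis
    using assms(3) by (simp add: mem_subcube_iff)
qed

definition unset_conflict :: "nat \<Rightarrow> bool option list \<Rightarrow> bool option list \<Rightarrow> bool option list \<Rightarrow> bool"
  where "unset_conflict n R \<rho> s \<longleftrightarrow> (\<exists>j<n. R ! j \<noteq> None \<and> s ! j \<noteq> None \<and> R ! j \<noteq> s ! j \<and> \<rho> ! j = None)"

lemma unset_conflict_if_inconsistent: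
  assumes "\<not> consistent n R s" "x \<in> subcube n \<rho>" "x \<in> subcube n R" "y \<in> subcube n \<rho>" "y \<in> subcube n s"
  shows "unset_conflict n R \<rho> s"
proof -
  obtain j where j: "j < n" "R ! j \<noteq> None" "s ! j \<noteq> None" "R ! j \<noteq> s ! j"
    using assms(1) by (auto simp: consistent_def)
  have "\<rho> ! j = None"
  proof (rule ccontr)
    assume "\<rho> ! j \<noteq> None"
    then have "\<rho> ! j = Some (x ! j)" "\<rho> ! j = Some (y ! j)"
      using assms(2,4) j(1) by (auto simp: mem_subcube_iff admits_def)
    moreover have "R ! j = Some (x ! j)" "s ! j = Some (y ! j)"
      using assms(3,5) j by (auto simp: mem_subcube_iff admits_def)
    ultimately show False
      using j(4) by simp
  qed
  with j show ?thesis
    by (auto simp: unset_conflict_def)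
qed

lemma not_unset_conflict_if_settled: "unset_bits n \<rho> R = 0 \<Longrightarrow> \<not> unset_conflict n R \<rho> s"
  by (auto simp: unset_conflict_def unset_bits_eq_0_iff)

lemma not_unset_conflict_replicate_None: "\<not> unset_conflict n (replicate n None) \<rho> s"
  by (auto simp: unset_conflict_def)

text \<open>Fixing a bit never raises the threshold test: if it removes the last unset conflict,
  that conflict sat at the fixed bit, which then also counted as an unset bit of s.\<close>

lemma unset_threshold_fix_bit:
  assumes "i < length \<rho>" "i < n" "\<rho> ! i = None"
    and "k + of_bool (unset_conflict n R (\<rho>[i := Some v]) s) < unset_bits n (\<rho>[i := Some v]) s"
  shows "k + of_bool (unset_conflict n R \<rho> s) < unset_bits n \<rho> s"
proof (cases "unset_conflict n R \<rho> s \<and> \<not> unset_conflict n R (\<rho>[i := Some v]) s")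
  case True
  then obtain j where j: "j < n" "R ! j \<noteq> None" "s ! j \<noteq> None" "R ! j \<noteq> s ! j" "\<rho> ! j = None"
    by (auto simp: unset_conflict_def)
  have "j = i"
  proof (rule ccontr)
    assume "j \<noteq> i"
    with j have "unset_conflict n R (\<rho>[i := Some v]) s"
      by (auto simp: unset_conflict_def)
    with True show False by simp
  qed
  with j have "0 < unset_bits n \<rho> s"
    by (intro unset_bits_pos) auto
  with True assms \<open>j = i\<close> j show ?thesis
    by (simp add: unset_bits_fix_bit)
next
  case False
  have "unset_conflict n R (\<rho>[i := Some v]) s \<Longrightarrow> unset_conflict n R \<rho> s"
    using assms(1) by (auto simp: unset_conflict_def nth_list_update split: if_splits)
  with False assms show ?thesis
    by (auto simp: unset_bits_fix_bit)
qed

section \<open>Product measures\<close>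

lemma cube_Suc: "cube (Suc n) = (\<lambda>(x, v). x @ [v]) ` (cube n \<times> UNIV)"
proof -
  have "x \<in> (\<lambda>(x, v). x @ [v]) ` (cube n \<times> UNIV)" if "length x = Suc n" for x
  proof -
    have "x = butlast x @ [last x]"
      using that by (metis append_butlast_last_id list.size(3) nat.distinct(1))
    moreover have "butlast x \<in> cube n"
      using that by (simp add: cube_def)
    ultimately show ?thesis
      by (metis (no_types, lifting) UNIV_I case_prod_conv image_iff mem_Sigma_iff)
  qed
  then show ?thesis
    by (auto simp: cube_def)
qed

lemma sum_cube_prod:
  "(\<Sum>x\<in>cube n. \<Prod>i<n. g i (x ! i)) = (\<Prod>i<n. g i True + g i False :: real)"
proof (induction n)
  case 0
  have "cube 0 = {[]}"
    by (auto simp: cube_def)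
  then show ?case by simp
next
  case (Suc n)
  have inj: "inj_on (\<lambda>(x, v). x @ [v]) (cube n \<times> (UNIV :: bool set))"
    by (auto simp: inj_on_def)
  have "(\<Sum>x\<in>cube (Suc n). \<Prod>i<Suc n. g i (x ! i))
      = (\<Sum>(x, v)\<in>cube n \<times> UNIV. \<Prod>i<Suc n. g i ((x @ [v]) ! i))"
    unfolding cube_Suc by (subst sum.reindex[OF inj]) (simp add: case_prod_beta)
  also have "\<dots> = (\<Sum>x\<in>cube n. \<Sum>v\<in>UNIV. (\<Prod>i<n. g i (x ! i)) * g n v)"
    by (simp add: sum.cartesian_product[symmetric] prod.lessThan_Suc nth_append cube_def)
  also have "\<dots> = (\<Sum>x\<in>cube n. \<Prod>i<n. g i (x ! i)) * (g n True + g n False)"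
    by (simp add: UNIV_bool sum.distrib sum_distrib_left algebra_simps)
  finally show ?case
    using Suc by (simp add: prod.lessThan_Suc)
qed

lemma prod_of_bool: "finite A \<Longrightarrow> (\<Prod>i\<in>A. of_bool (P i) :: real) = of_bool (\<forall>i\<in>A. P i)"
  by (induction A rule: finite_induct) auto

lemma mu_subset_cube: "A \<subseteq> cube n \<Longrightarrow> mu n p A = (\<Sum>x\<in>A. mu_pt n p x)"
  unfolding mu_def by (simp add: Int_absorb2)

lemma mu_inter_subcube: "mu n p (A \<inter> subcube n s) = (\<Sum>x\<in>A \<inter> subcube n s. mu_pt n p x)"
  using subcube_subset_cube by (intro mu_subset_cube) blast

lemma mu_pt_nonneg: "prod_dist n p \<Longrightarrow> 0 \<le> mu_pt n p x"
  unfolding mu_pt_def prod_dist_def by (auto intro!: prod_nonneg)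

lemma mu_nonneg: "prod_dist n p \<Longrightarrow> 0 \<le> mu n p A"
  unfolding mu_def by (simp add: sum_nonneg mu_pt_nonneg)

definition bit_mass :: "(bool \<Rightarrow> bool) \<Rightarrow> real \<Rightarrow> real" where
  "bit_mass P q = of_bool (P True) * q + of_bool (P False) * (1 - q)"

lemma mu_coordinatewise:
  assumes "\<And>x. x \<in> cube n \<Longrightarrow> x \<in> A \<longleftrightarrow> (\<forall>i<n. P i (x ! i))"
  shows "mu n p A = (\<Prod>i<n. bit_mass (P i) (p i))"
proof -
  have "mu n p A = (\<Sum>x\<in>cube n. of_bool (x \<in> A) * mu_pt n p x)"
    unfolding mu_def Int_commute[of A] sum.inter_restrict[OF finite_cube] by (intro sum.cong) auto
  also have "\<dots> = (\<Sum>x\<in>cube n. \<Prod>i<n. of_bool (P i (x ! i)) * (if x ! i then p i else 1 - p i))"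
  proof (rule sum.cong[OF refl])
    fix x assume "x \<in> cube n"
    then show "of_bool (x \<in> A) * mu_pt n p x
        = (\<Prod>i<n. of_bool (P i (x ! i)) * (if x ! i then p i else 1 - p i))"
      unfolding prod.distrib prod_of_bool[OF finite_lessThan] mu_pt_def using assms by auto
  qed
  also have "\<dots> = (\<Prod>i<n. bit_mass (P i) (p i))"
    by (subst sum_cube_prod) (simp add: bit_mass_def)
  finally show ?thesis .
qed

lemma mu_cube: "mu n p (cube n) = 1"
  using mu_coordinatewise[of n "cube n" "\<lambda>_ _. True" p] by (simp add: bit_mass_def)

lemma bit_mass_correlation:
  assumes "0 \<le> q" "q \<le> 1" "X \<noteq> None \<longrightarrow> Y \<noteq> None \<longrightarrow> X = Y"
  shows "0 \<le> bit_mass (\<lambda>v. admits r v \<and> admits X v) q * bit_mass (\<lambda>v. admits r v \<and> admits Y v) q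
    \<and> bit_mass (\<lambda>v. admits r v \<and> admits X v) q * bit_mass (\<lambda>v. admits r v \<and> admits Y v) q
      \<le> bit_mass (admits r) q * bit_mass (\<lambda>v. admits r v \<and> admits X v \<and> admits Y v) q"
proof -
  have "q * 2 \<le> 1 + q * q"
    using zero_le_power2[of "1 - q"] by (simp add: power2_eq_square algebra_simps)
  with assms show ?thesis
    unfolding bit_mass_def
    by (cases X; cases Y; cases r)
      (auto simp: admits_def algebra_simps mult_le_cancel_left1 mult_le_cancel_right1
        mult_right_le_one_le)
qed

lemma mu_subcube_correlation:
  assumes "prod_dist n p" "consistent n X Y"
  shows "mu n p (subcube n \<rho> \<inter> subcube n X) * mu n p (subcube n \<rho> \<inter> subcube n Y)
    \<le> mu n p (subcube n \<rho>) * mu n p (subcube n \<rho> \<inter> subcube n X \<inter> subcube n Y)"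
proof -
  let ?m = "\<lambda>P. \<Prod>i<n. bit_mass (P i) (p i)"
  have "mu n p (subcube n \<rho> \<inter> subcube n X) * mu n p (subcube n \<rho> \<inter> subcube n Y)
      = ?m (\<lambda>i v. admits (\<rho> ! i) v \<and> admits (X ! i) v) * ?m (\<lambda>i v. admits (\<rho> ! i) v \<and> admits (Y ! i) v)"
    by (subst (1 2) mu_coordinatewise) (auto simp: mem_subcube_iff)
  also have "\<dots> \<le> ?m (\<lambda>i v. admits (\<rho> ! i) v)
      * ?m (\<lambda>i v. admits (\<rho> ! i) v \<and> admits (X ! i) v \<and> admits (Y ! i) v)"
    unfolding prod.distrib[symmetric]
    by (rule prod_mono, rule bit_mass_correlation)
      (use assms in \<open>auto simp: prod_dist_def consistent_def\<close>)
  also have "\<dots> = mu n p (subcube n \<rho>) * mu n p (subcube n \<rho> \<inter> subcube n X \<inter> subcube n Y)"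
    by (subst (1 2) mu_coordinatewise) (auto simp: mem_subcube_iff)
  finally show ?thesis .
qed

section \<open>Covers\<close>

definition cover :: "nat \<Rightarrow> (bool option list \<Rightarrow> real) \<Rightarrow> bool list \<Rightarrow> real" where
  "cover n g x = (\<Sum>s\<in>{s \<in> supports n. x \<in> subcube n s}. g s)"

lemma cover_nonneg: "(\<And>s. s \<in> supports n \<Longrightarrow> 0 \<le> g s) \<Longrightarrow> 0 \<le> cover n g x"
  unfolding cover_def by (auto intro!: sum_nonneg)

lemma cover_mono:
  "(\<And>s. s \<in> supports n \<Longrightarrow> x \<in> subcube n s \<Longrightarrow> g s \<le> g' s) \<Longrightarrow> cover n g x \<le> cover n g' x"
  unfolding cover_def by (auto intro!: sum_mono)

lemma cover_add: "cover n (\<lambda>s. g s + g' s) x = cover n g x + cover n g' x"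
  unfolding cover_def by (rule sum.distrib)

lemma cover_settled_le:
  assumes "\<And>s. s \<in> supports n \<Longrightarrow> 0 \<le> g s" "y \<in> subcube n \<rho>" "z \<in> subcube n \<rho>"
  shows "cover n (\<lambda>s. if unset_bits n \<rho> s = 0 then g s else 0) y \<le> cover n g z"
proof -
  have "cover n (\<lambda>s. if unset_bits n \<rho> s = 0 then g s else 0) y
      = sum g {s \<in> {s \<in> supports n. y \<in> subcube n s}. unset_bits n \<rho> s = 0}"
    unfolding cover_def by (rule sum.inter_filter[symmetric]) (simp add: finite_supports)
  also have "\<dots> \<le> cover n g z"
    unfolding cover_def
    by (rule sum_mono2) (auto simp: finite_supports assms mem_subcube_if_settled[OF _ assms(2,3)])
  finally show ?thesis .
qed

lemma sum_supports_sum_subcube: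
  fixes g :: "bool option list \<Rightarrow> real"
  shows "(\<Sum>s\<in>supports n. g s * (\<Sum>x\<in>A \<inter> subcube n s. h x))
    = (\<Sum>x\<in>A \<inter> cube n. h x * cover n g x)"
proof -
  have restrict: "A \<inter> subcube n s = {x. x \<in> A \<inter> cube n \<and> x \<in> subcube n s}" for s
    using subcube_subset_cube by blast
  have "(\<Sum>s\<in>supports n. g s * (\<Sum>x\<in>A \<inter> subcube n s. h x))
      = (\<Sum>s\<in>supports n. \<Sum>x\<in>{x. x \<in> A \<inter> cube n \<and> x \<in> subcube n s}. g s * h x)"
    by (intro sum.cong refl) (subst restrict, rule sum_distrib_left)
  also have "\<dots> = (\<Sum>x\<in>A \<inter> cube n. \<Sum>s\<in>{s. s \<in> supports n \<and> x \<in> subcube n s}. g s * h x)"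
    by (rule sum.swap_restrict[symmetric]) (simp_all add: finite_cube finite_supports)
  finally show ?thesis
    by (simp add: cover_def sum_distrib_left mult.commute)
qed

lemma sum_supports_mu_inter:
  fixes g :: "bool option list \<Rightarrow> real"
  shows "(\<Sum>s\<in>supports n. g s * mu n p (A \<inter> subcube n s)) = (\<Sum>x\<in>A \<inter> cube n. mu_pt n p x * cover n g x)"
  unfolding mu_inter_subcube by (rule sum_supports_sum_subcube)

lemma sum_supports_pairs_mu_inter:
  fixes g g' :: "bool option list \<Rightarrow> real"
  shows "(\<Sum>R\<in>supports n. g R * (\<Sum>s\<in>supports n. g' s * mu n p (A \<inter> subcube n R \<inter> subcube n s)))
    = (\<Sum>x\<in>A \<inter> cube n. mu_pt n p x * cover n g x * cover n g' x)"
proof -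
  have "A \<inter> subcube n R \<inter> cube n = A \<inter> subcube n R" for R
    using subcube_subset_cube by blast
  then have "(\<Sum>R\<in>supports n. g R * (\<Sum>s\<in>supports n. g' s * mu n p (A \<inter> subcube n R \<inter> subcube n s)))
      = (\<Sum>R\<in>supports n. g R * (\<Sum>x\<in>A \<inter> subcube n R. mu_pt n p x * cover n g' x))"
    by (simp add: sum_supports_mu_inter)
  also have "\<dots> = (\<Sum>x\<in>A \<inter> cube n. mu_pt n p x * cover n g' x * cover n g x)"
    by (rule sum_supports_sum_subcube)
  finally show ?thesis
    by (simp add: mult_ac)
qed

lemma exists_le_weighted_average:
  fixes c g :: "'a \<Rightarrow> real"
  assumes "finite S" "\<And>x. x \<in> S \<Longrightarrow> 0 \<le> c x" "0 < sum c S"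
  shows "\<exists>x\<in>S. 0 < c x \<and> g x * sum c S \<le> (\<Sum>x\<in>S. c x * g x)"
proof -
  let ?P = "{x \<in> S. 0 < c x}"
  have "?P \<noteq> {}"
  proof
    assume "?P = {}"
    then have "sum c S \<le> 0"
      by (intro sum_nonpos) (auto simp: not_less)
    with assms(3) show False by simp
  qed
  moreover have "finite ?P"
    using assms(1) by simp
  ultimately have "arg_min_on g ?P \<in> ?P \<and> (\<forall>x\<in>?P. g (arg_min_on g ?P) \<le> g x)"
    using arg_min_if_finite[of ?P g] by (auto simp: not_less)
  then obtain x0 where x0: "x0 \<in> ?P" "\<And>x. x \<in> ?P \<Longrightarrow> g x0 \<le> g x"
    by blast
  have "g x0 * sum c S = (\<Sum>x\<in>S. c x * g x0)"
    by (simp add: sum_distrib_left mult.commute)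
  also have "\<dots> \<le> (\<Sum>x\<in>S. c x * g x)"
  proof (rule sum_mono)
    fix x assume "x \<in> S"
    then have "0 \<le> c x"
      by (rule assms(2))
    moreover have "c x \<noteq> 0 \<Longrightarrow> g x0 \<le> g x"
      using x0(2) \<open>x \<in> S\<close> calculation by simp
    ultimately show "c x * g x0 \<le> c x * g x"
      by (cases "c x = 0") (auto intro: mult_left_mono)
  qed
  finally show ?thesis
    using x0(1) by blast
qed

section \<open>The potential argument\<close>

locale feasible_weights =
  fixes n :: nat and p :: "nat \<Rightarrow> real" and f :: "bool list \<Rightarrow> bool"
    and u w :: "bool option list \<Rightarrow> real"
    and \<alpha>0 \<beta>0 \<beta>1 \<theta> :: real and a b :: nat
  assumes prod_dist: "prod_dist n p"
    and u_nonneg: "\<And>s. s \<in> supports n \<Longrightarrow> 0 \<le> u s"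
    and w_nonneg: "\<And>s. s \<in> supports n \<Longrightarrow> 0 \<le> w s"
    and u_supp_size: "\<And>s. s \<in> supports n \<Longrightarrow> u s \<noteq> 0 \<Longrightarrow> supp_size n s \<le> a"
    and w_supp_size: "\<And>s. s \<in> supports n \<Longrightarrow> w s \<noteq> 0 \<Longrightarrow> supp_size n s \<le> b"
    and u_cover_zero: "\<And>x. x \<in> cube n \<Longrightarrow> \<not> f x \<Longrightarrow> 1 - \<alpha>0 \<le> cover n u x"
    and u_cover_one: "\<And>x. x \<in> cube n \<Longrightarrow> f x \<Longrightarrow> cover n u x \<le> \<beta>0"
    and w_cover_le_1: "\<And>x. x \<in> cube n \<Longrightarrow> cover n w x \<le> 1"
    and w_cover_zero: "\<And>x. x \<in> cube n \<Longrightarrow> \<not> f x \<Longrightarrow> cover n w x \<le> \<beta>1"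
    and \<alpha>0_less_1: "\<alpha>0 < 1" and \<beta>0_nonneg: "0 \<le> \<beta>0" and \<beta>1_nonneg: "0 \<le> \<beta>1"
    and \<theta>_pos: "0 < \<theta>"
begin

definition mass :: "bool option list \<Rightarrow> real" where
  "mass \<rho> = (\<Sum>x\<in>subcube n \<rho>. mu_pt n p x)"

definition mass0 :: "bool option list \<Rightarrow> real" where
  "mass0 \<rho> = (\<Sum>x\<in>subcube n \<rho>. if f x then 0 else mu_pt n p x)"

definition mass1 :: "bool option list \<Rightarrow> real" where
  "mass1 \<rho> = (\<Sum>x\<in>subcube n \<rho>. if f x then mu_pt n p x else 0)"

definition uncovered_mass :: "bool option list \<Rightarrow> real" where
  "uncovered_mass \<rho> = (\<Sum>x\<in>subcube n \<rho>. if f x then mu_pt n p x * (1 - cover n w x) else 0)"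

definition open_cover :: "bool option list \<Rightarrow> nat \<Rightarrow> bool option list \<Rightarrow> bool list \<Rightarrow> real" where
  "open_cover R k \<rho> x =
    cover n (\<lambda>s. if k + of_bool (unset_conflict n R \<rho> s) < unset_bits n \<rho> s then w s else 0) x"

definition open_mass :: "bool option list \<Rightarrow> nat \<Rightarrow> bool option list \<Rightarrow> real" where
  "open_mass R k \<rho> = (\<Sum>x\<in>subcube n \<rho>. if f x then mu_pt n p x * open_cover R k \<rho> x else 0)"

definition consistent_mass :: "bool option list \<Rightarrow> bool option list \<Rightarrow> real" where
  "consistent_mass R \<rho> = (\<Sum>x\<in>subcube n \<rho>.
    if f x then mu_pt n p x * cover n (\<lambda>s. if consistent n R s then w s else 0) x else 0)"

definition round_cost :: real where
  "round_cost = \<beta>1 + \<beta>0 / ((1 - \<alpha>0) * \<theta>)"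

text \<open>The potential bounds the error reachable below \<rho> with depth a k plus the unset bits of R
  still to be queried. The first term pays for a 1-leaf once mass0 \<rho> \<le> \<theta> mass \<rho>, the next three
  pay for a 0-leaf (see mass1_le_if_zero_input), and each remaining round costs round_cost mass \<rho>.
  A 1-certificate stays open while it has more unset bits than rounds left, plus one if an unset
  bit of it conflicts with R: querying R fixes that bit.\<close>

definition potential :: "bool option list \<Rightarrow> nat \<Rightarrow> bool option list \<Rightarrow> real" where
  "potential R k \<rho> = \<theta> * mass \<rho> + uncovered_mass \<rho> + \<beta>1 * mass1 \<rho> + open_mass R k \<rho>
    + real k * round_cost * mass \<rho>"

definition tree_error :: "dtree \<Rightarrow> bool option list \<Rightarrow> real" where
  "tree_error T \<rho> = (\<Sum>x\<in>subcube n \<rho>. if dt_eval T x \<noteq> f x then mu_pt n p x else 0)"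

lemma point_mass_nonneg: "0 \<le> mu_pt n p x"
  using mu_pt_nonneg[OF prod_dist] .

lemma mass_eq_mu: "mass \<rho> = mu n p (subcube n \<rho>)"
  unfolding mass_def by (simp add: mu_subset_cube subcube_subset_cube)

lemma mass_nonneg: "0 \<le> mass \<rho>"
  unfolding mass_def by (simp add: sum_nonneg point_mass_nonneg)

lemma mass1_nonneg: "0 \<le> mass1 \<rho>"
  unfolding mass1_def by (simp add: sum_nonneg point_mass_nonneg)

lemma mass_eq: "mass \<rho> = mass0 \<rho> + mass1 \<rho>"
  unfolding mass_def mass0_def mass1_def sum.distrib[symmetric] by (rule sum.cong) auto

lemma mass1_le_mass: "mass1 \<rho> \<le> mass \<rho>"
  using mass_eq[of \<rho>] by (simp add: mass0_def sum_nonneg point_mass_nonneg)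

lemma uncovered_mass_nonneg: "0 \<le> uncovered_mass \<rho>"
  unfolding uncovered_mass_def
  by (auto intro!: sum_nonneg mult_nonneg_nonneg point_mass_nonneg simp: subcube_def w_cover_le_1)

lemma open_mass_nonneg: "0 \<le> open_mass R k \<rho>"
  unfolding open_mass_def open_cover_def
  by (auto intro!: sum_nonneg mult_nonneg_nonneg point_mass_nonneg cover_nonneg simp: w_nonneg)

lemma round_cost_nonneg: "0 \<le> round_cost"
  unfolding round_cost_def using \<alpha>0_less_1 \<beta>0_nonneg \<beta>1_nonneg \<theta>_pos by simp

lemma potential_ge: "\<theta> * mass \<rho> \<le> potential R k \<rho>"
  unfolding potential_def
  using uncovered_mass_nonneg open_mass_nonneg mass1_nonneg mass_nonneg round_cost_nonneg \<beta>1_nonneg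
  by (simp add: add_nonneg_nonneg)

lemma tree_error_Leaf:
  "tree_error (Leaf True) \<rho> = mass0 \<rho>" "tree_error (Leaf False) \<rho> = mass1 \<rho>"
  unfolding tree_error_def mass0_def mass1_def by (auto intro!: sum.cong)

lemma tree_error_Node:
  assumes "i < length \<rho>" "i < n" "\<rho> ! i = None"
  shows "tree_error (Node i l r) \<rho> = tree_error l (\<rho>[i := Some False]) + tree_error r (\<rho>[i := Some True])"
  unfolding tree_error_def sum_subcube_split[OF assms]
  by (intro arg_cong2[where f = "(+)"] sum.cong) (auto simp: subcube_fix_bit[OF assms])

lemma open_cover_fix_bit_le:
  assumes "i < length \<rho>" "i < n" "\<rho> ! i = None"
  shows "open_cover R k (\<rho>[i := Some v]) x \<le> open_cover R k \<rho> x"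
  unfolding open_cover_def
proof (rule cover_mono)
  fix s assume "s \<in> supports n"
  then show "(if k + of_bool (unset_conflict n R (\<rho>[i := Some v]) s) < unset_bits n (\<rho>[i := Some v]) s
      then w s else 0) \<le> (if k + of_bool (unset_conflict n R \<rho> s) < unset_bits n \<rho> s then w s else 0)"
    using unset_threshold_fix_bit[OF assms, of k R v s] w_nonneg by auto
qed

lemma potential_fix_bit:
  assumes "i < length \<rho>" "i < n" "\<rho> ! i = None"
  shows "potential R k (\<rho>[i := Some False]) + potential R k (\<rho>[i := Some True]) \<le> potential R k \<rho>"
proof -
  let ?F = "\<rho>[i := Some False]" and ?T = "\<rho>[i := Some True]"
  have "open_mass R k ?F + open_mass R k ?T \<le> open_mass R k \<rho>"
    unfolding open_mass_def
      sum_subcube_split[OF assms, of "\<lambda>x. if f x then _ x * open_cover R k \<rho> x else 0"]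
    by (intro add_mono sum_mono)
      (auto intro!: mult_left_mono open_cover_fix_bit_le[OF assms] point_mass_nonneg)
  moreover have "mass \<rho> = mass ?F + mass ?T" "mass1 \<rho> = mass1 ?F + mass1 ?T"
    "uncovered_mass \<rho> = uncovered_mass ?F + uncovered_mass ?T"
    unfolding mass_def mass1_def uncovered_mass_def by (rule sum_subcube_split[OF assms])+
  ultimately show ?thesis
    unfolding potential_def by (simp add: algebra_simps)
qed

lemma potential_settled:
  assumes "unset_bits n \<rho> R = 0"
  shows "potential R k \<rho> = potential (replicate n None) k \<rho>"
proof -
  have "\<not> unset_conflict n R \<rho> s" "\<not> unset_conflict n (replicate n None) \<rho> s" for s
    using assms by (simp_all add: not_unset_conflict_if_settled not_unset_conflict_replicate_None)
  then show ?thesis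
    unfolding potential_def open_mass_def open_cover_def by (simp cong: if_cong)
qed

lemma query_certificate:
  assumes IH: "\<And>\<rho>. length \<rho> = n \<Longrightarrow> \<exists>T. dt_vars T \<subseteq> {i. i < n \<and> \<rho> ! i = None}
      \<and> dt_depth T \<le> a * k \<and> tree_error T \<rho> \<le> potential (replicate n None) k \<rho>"
  shows "length \<rho> = n \<Longrightarrow> \<exists>T. dt_vars T \<subseteq> {i. i < n \<and> \<rho> ! i = None}
      \<and> dt_depth T \<le> unset_bits n \<rho> R + a * k \<and> tree_error T \<rho> \<le> potential R k \<rho>"
proof (induction "unset_bits n \<rho> R" arbitrary: \<rho> rule: less_induct)
  case less
  show ?case
  proof (cases "unset_bits n \<rho> R = 0")
    case True
    then show ?thesis
      using IH[OF less.prems] by (simp add: potential_settled)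
  next
    case False
    then obtain i where i: "i < n" "R ! i \<noteq> None" "\<rho> ! i = None"
      by (auto simp: unset_bits_eq_0_iff)
    have i': "i < length \<rho>"
      using i less.prems by simp
    have smaller: "unset_bits n (\<rho>[i := Some v]) R < unset_bits n \<rho> R" for v
      using False unset_bits_fix_bit[OF i' i(1,3)] i(2) by simp
    have free: "{j. j < n \<and> \<rho>[i := Some v] ! j = None} \<subseteq> {j. j < n \<and> \<rho> ! j = None} - {i}" for v
      using i' by (auto simp: nth_list_update)
    have "\<exists>T. dt_vars T \<subseteq> {j. j < n \<and> \<rho>[i := Some v] ! j = None}
        \<and> dt_depth T \<le> unset_bits n (\<rho>[i := Some v]) R + a * k
        \<and> tree_error T (\<rho>[i := Some v]) \<le> potential R k (\<rho>[i := Some v])" for v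
      using less.hyps[OF smaller[of v]] less.prems by simp
    then obtain TF TT where
      TF: "dt_vars TF \<subseteq> {j. j < n \<and> \<rho>[i := Some False] ! j = None}"
        "dt_depth TF \<le> unset_bits n (\<rho>[i := Some False]) R + a * k"
        "tree_error TF (\<rho>[i := Some False]) \<le> potential R k (\<rho>[i := Some False])" and
      TT: "dt_vars TT \<subseteq> {j. j < n \<and> \<rho>[i := Some True] ! j = None}"
        "dt_depth TT \<le> unset_bits n (\<rho>[i := Some True]) R + a * k"
        "tree_error TT (\<rho>[i := Some True]) \<le> potential R k (\<rho>[i := Some True])"
      by meson
    show ?thesis
    proof (intro exI conjI)
      show "dt_vars (Node i TF TT) \<subseteq> {j. j < n \<and> \<rho> ! j = None}"
        using TF(1) TT(1) free i by auto
      show "dt_depth (Node i TF TT) \<le> unset_bits n \<rho> R + a * k"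
        using TF(2) TT(2) smaller[of False] smaller[of True] by simp
      show "tree_error (Node i TF TT) \<rho> \<le> potential R k \<rho>"
        using tree_error_Node[OF i' i(1,3), of TF TT] TF(3) TT(3) potential_fix_bit[OF i' i(1,3), of R k]
        by linarith
    qed
  qed
qed

lemma open_mass_le_consistent_mass:
  assumes "x0 \<in> subcube n \<rho>" "x0 \<in> subcube n R"
  shows "open_mass R k \<rho> \<le> open_mass (replicate n None) (Suc k) \<rho> + consistent_mass R \<rho>"
proof -
  let ?G = "\<lambda>s. (if Suc k < unset_bits n \<rho> s then w s else 0) + (if consistent n R s then w s else 0)"
  have "open_cover R k \<rho> y \<le> cover n ?G y" if "y \<in> subcube n \<rho>" for y
    unfolding open_cover_def
  proof (rule cover_mono)
    fix s assume s: "s \<in> supports n" "y \<in> subcube n s"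
    show "(if k + of_bool (unset_conflict n R \<rho> s) < unset_bits n \<rho> s then w s else 0) \<le> ?G s"
      using unset_conflict_if_inconsistent[OF _ assms that s(2)] w_nonneg[OF s(1)] by auto
  qed
  then have "open_cover R k \<rho> y
      \<le> open_cover (replicate n None) (Suc k) \<rho> y + cover n (\<lambda>s. if consistent n R s then w s else 0) y"
    if "y \<in> subcube n \<rho>" for y
    using that by (simp add: cover_add open_cover_def not_unset_conflict_replicate_None)
  then show ?thesis
    unfolding open_mass_def consistent_mass_def sum.distrib[symmetric]
    by (intro sum_mono) (auto simp flip: distrib_left intro: mult_left_mono point_mass_nonneg)
qed

text \<open>Certificates with no unset bit contain all of \<rho> or none of it, so at a 0-input z of \<rho> they
  carry w-weight at most \<beta>1; everything else is open.\<close>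

lemma mass1_le_if_zero_input:
  assumes "z \<in> subcube n \<rho>" "\<not> f z"
  shows "mass1 \<rho> \<le> uncovered_mass \<rho> + \<beta>1 * mass1 \<rho> + open_mass (replicate n None) 0 \<rho>"
proof -
  have cover_bound: "cover n w y \<le> \<beta>1 + open_cover (replicate n None) 0 \<rho> y"
    if "y \<in> subcube n \<rho>" for y
  proof -
    have "cover n w y = cover n (\<lambda>s. (if unset_bits n \<rho> s = 0 then w s else 0)
        + (if 0 < unset_bits n \<rho> s then w s else 0)) y"
      unfolding cover_def by (intro sum.cong) auto
    also have "\<dots> = cover n (\<lambda>s. if unset_bits n \<rho> s = 0 then w s else 0) y
        + open_cover (replicate n None) 0 \<rho> y"
      by (simp add: cover_add open_cover_def not_unset_conflict_replicate_None)
    also have "\<dots> \<le> cover n w z + open_cover (replicate n None) 0 \<rho> y"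
      using cover_settled_le[OF _ that assms(1)] w_nonneg by simp
    finally show ?thesis
      using w_cover_zero[of z] assms subcube_subset_cube by force
  qed
  have "(if f y then mu_pt n p y else 0)
      \<le> (if f y then mu_pt n p y * (1 - cover n w y) else 0) + \<beta>1 * (if f y then mu_pt n p y else 0)
        + (if f y then mu_pt n p y * open_cover (replicate n None) 0 \<rho> y else 0)"
    if "y \<in> subcube n \<rho>" for y
    using mult_left_mono[OF cover_bound[OF that] point_mass_nonneg] by (auto simp: algebra_simps)
  then show ?thesis
    unfolding mass1_def uncovered_mass_def open_mass_def
    by (simp add: sum_distrib_left sum.distrib[symmetric] sum_mono)
qed

lemma mass0_le_u_mass: "(1 - \<alpha>0) * mass0 \<rho> \<le> (\<Sum>x\<in>subcube n \<rho>. mu_pt n p x * cover n u x)"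
  unfolding mass0_def sum_distrib_left
proof (rule sum_mono)
  fix x assume "x \<in> subcube n \<rho>"
  then have "x \<in> cube n"
    using subcube_subset_cube by blast
  then show "(1 - \<alpha>0) * (if f x then 0 else mu_pt n p x) \<le> mu_pt n p x * cover n u x"
    using mult_left_mono[OF u_cover_zero point_mass_nonneg] point_mass_nonneg[of x]
      cover_nonneg[of n u x] u_nonneg
    by (auto simp: mult.commute)
qed

lemma uw_mass_le:
  "(\<Sum>x\<in>subcube n \<rho>. mu_pt n p x * cover n u x * cover n w x)
    \<le> \<beta>1 * (\<Sum>x\<in>subcube n \<rho>. mu_pt n p x * cover n u x) + \<beta>0 * mass \<rho>"
  unfolding mass_def sum_distrib_left sum.distrib[symmetric]
proof (rule sum_mono)
  fix x assume "x \<in> subcube n \<rho>"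
  then have x: "x \<in> cube n"
    using subcube_subset_cube by blast
  have U: "0 \<le> cover n u x" and W: "0 \<le> cover n w x"
    by (simp_all add: cover_nonneg u_nonneg w_nonneg)
  have "cover n u x * cover n w x \<le> \<beta>1 * cover n u x + \<beta>0"
  proof (cases "f x")
    case True
    then have "cover n u x * cover n w x \<le> \<beta>0"
      using mult_mono[OF u_cover_one[OF x True] w_cover_le_1[OF x] \<beta>0_nonneg W] by simp
    then show ?thesis
      using U \<beta>1_nonneg by (simp add: add_increasing)
  next
    case False
    then show ?thesis
      using mult_left_mono[OF w_cover_zero[OF x False] U] \<beta>0_nonneg by (simp add: mult.commute)
  qed
  from mult_left_mono[OF this point_mass_nonneg]
  show "mu_pt n p x * cover n u x * cover n w x
      \<le> \<beta>1 * (mu_pt n p x * cover n u x) + \<beta>0 * mu_pt n p x"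
    by (simp add: algebra_simps)
qed

lemma consistent_mass_le:
  "consistent_mass R \<rho>
    \<le> (\<Sum>s\<in>supports n. (if consistent n R s then w s else 0) * mu n p (subcube n \<rho> \<inter> subcube n s))"
proof -
  have "consistent_mass R \<rho>
      \<le> (\<Sum>x\<in>subcube n \<rho>. mu_pt n p x * cover n (\<lambda>s. if consistent n R s then w s else 0) x)"
    unfolding consistent_mass_def
    by (intro sum_mono) (auto intro!: mult_nonneg_nonneg point_mass_nonneg cover_nonneg simp: w_nonneg)
  also have "\<dots>
      = (\<Sum>s\<in>supports n. (if consistent n R s then w s else 0) * mu n p (subcube n \<rho> \<inter> subcube n s))"
    using Int_absorb2[OF subcube_subset_cube] by (simp add: sum_supports_mu_inter)
  finally show ?thesis .
qed

lemma u_weighted_consistent_mass_le: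
  "(\<Sum>R\<in>supports n. u R * mu n p (subcube n \<rho> \<inter> subcube n R) * consistent_mass R \<rho>)
    \<le> mass \<rho> * (\<Sum>x\<in>subcube n \<rho>. mu_pt n p x * cover n u x * cover n w x)"
proof -
  let ?m = "\<lambda>s. mu n p (subcube n \<rho> \<inter> subcube n s)"
  let ?m2 = "\<lambda>R s. mu n p (subcube n \<rho> \<inter> subcube n R \<inter> subcube n s)"
  have "u R * ?m R * consistent_mass R \<rho> \<le> u R * (\<Sum>s\<in>supports n. w s * (mass \<rho> * ?m2 R s))"
    if R: "R \<in> supports n" for R
  proof -
    have "u R * ?m R * consistent_mass R \<rho>
        \<le> u R * ?m R * (\<Sum>s\<in>supports n. (if consistent n R s then w s else 0) * ?m s)"
      using u_nonneg[OF R] mu_nonneg[OF prod_dist]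
      by (intro mult_left_mono[OF consistent_mass_le]) simp
    also have "\<dots> = u R * (\<Sum>s\<in>supports n. w s * (if consistent n R s then ?m R * ?m s else 0))"
      unfolding sum_distrib_left by (intro sum.cong) (auto simp: mult_ac)
    also have "\<dots> \<le> u R * (\<Sum>s\<in>supports n. w s * (mass \<rho> * ?m2 R s))"
      using mu_subcube_correlation[OF prod_dist] mu_nonneg[OF prod_dist]
      by (intro mult_left_mono sum_mono) (auto simp: u_nonneg w_nonneg R mass_eq_mu)
    finally show ?thesis .
  qed
  then have "(\<Sum>R\<in>supports n. u R * ?m R * consistent_mass R \<rho>)
      \<le> mass \<rho> * (\<Sum>R\<in>supports n. u R * (\<Sum>s\<in>supports n. w s * ?m2 R s))"
    by (simp add: sum_distrib_left mult_ac sum_mono)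
  also have "\<dots> = mass \<rho> * (\<Sum>x\<in>subcube n \<rho>. mu_pt n p x * cover n u x * cover n w x)"
    using Int_absorb2[OF subcube_subset_cube] by (simp add: sum_supports_pairs_mu_inter)
  finally show ?thesis .
qed

lemma le_round_cost_mass:
  assumes "0 < D" "(1 - \<alpha>0) * \<theta> * M \<le> D" "0 \<le> M" "x * D \<le> M * (\<beta>1 * D + \<beta>0 * M)"
  shows "x \<le> round_cost * M"
proof -
  define K where "K = (1 - \<alpha>0) * \<theta>"
  have "0 < K"
    using \<alpha>0_less_1 \<theta>_pos by (simp add: K_def)
  then have "\<beta>0 * M * M \<le> \<beta>0 * M * (D / K)"
    using assms(2,3) \<beta>0_nonneg
    by (intro mult_left_mono) (simp_all add: K_def pos_le_divide_eq mult.commute)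
  then have "x * D \<le> round_cost * M * D"
    using assms(4) by (simp add: round_cost_def K_def algebra_simps)
  then show ?thesis
    using assms(1) by simp
qed

lemma exists_cheap_zero_certificate:
  assumes "\<theta> * mass \<rho> < mass0 \<rho>"
  shows "\<exists>R\<in>supports n. u R \<noteq> 0 \<and> subcube n \<rho> \<inter> subcube n R \<noteq> {}
    \<and> consistent_mass R \<rho> \<le> round_cost * mass \<rho>"
proof -
  let ?c = "\<lambda>R. u R * mu n p (subcube n \<rho> \<inter> subcube n R)"
  let ?D = "\<Sum>x\<in>subcube n \<rho>. mu_pt n p x * cover n u x"
  have M: "0 < mass \<rho>"
    using assms mass_eq[of \<rho>] mass1_nonneg[of \<rho>] mass_nonneg[of \<rho>] \<theta>_pos
    by (smt (verit) mult_nonneg_nonneg)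
  have "(1 - \<alpha>0) * \<theta> * mass \<rho> \<le> (1 - \<alpha>0) * mass0 \<rho>"
    using assms \<alpha>0_less_1 by (simp add: mult.assoc)
  then have KM: "(1 - \<alpha>0) * \<theta> * mass \<rho> \<le> ?D"
    using mass0_le_u_mass by (rule order_trans)
  then have D: "0 < ?D"
    using \<alpha>0_less_1 \<theta>_pos M by (smt (verit) mult_pos_pos)
  have "sum ?c (supports n) = ?D"
    using Int_absorb2[OF subcube_subset_cube] by (simp add: sum_supports_mu_inter)
  then obtain R where R: "R \<in> supports n" "0 < ?c R"
    and avg: "consistent_mass R \<rho> * ?D \<le> (\<Sum>R\<in>supports n. ?c R * consistent_mass R \<rho>)"
    using exists_le_weighted_average[of "supports n" ?c "\<lambda>R. consistent_mass R \<rho>"] D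
      finite_supports u_nonneg mu_nonneg[OF prod_dist] by auto
  have "consistent_mass R \<rho> * ?D \<le> mass \<rho> * (\<beta>1 * ?D + \<beta>0 * mass \<rho>)"
    using avg u_weighted_consistent_mass_le[of \<rho>] mult_left_mono[OF uw_mass_le[of \<rho>] mass_nonneg[of \<rho>]]
    by linarith
  then have "consistent_mass R \<rho> \<le> round_cost * mass \<rho>"
    by (rule le_round_cost_mass[OF D KM mass_nonneg])
  moreover have "u R \<noteq> 0" "subcube n \<rho> \<inter> subcube n R \<noteq> {}"
    using R(2) by (auto simp: mu_def)
  ultimately show ?thesis
    using R(1) by blast
qed

lemma decision_tree_potential:
  "length \<rho> = n \<Longrightarrow> \<exists>T. dt_vars T \<subseteq> {i. i < n \<and> \<rho> ! i = None} \<and> dt_depth T \<le> a * k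
    \<and> tree_error T \<rho> \<le> potential (replicate n None) k \<rho>"
proof (induction k arbitrary: \<rho>)
  case 0
  show ?case
  proof (cases "\<exists>z\<in>subcube n \<rho>. \<not> f z")
    case True
    then obtain z where "z \<in> subcube n \<rho>" "\<not> f z"
      by blast
    then have "mass1 \<rho> \<le> uncovered_mass \<rho> + \<beta>1 * mass1 \<rho> + open_mass (replicate n None) 0 \<rho>"
      by (rule mass1_le_if_zero_input)
    then have "tree_error (Leaf False) \<rho> \<le> potential (replicate n None) 0 \<rho>"
      using mult_nonneg_nonneg[OF less_imp_le[OF \<theta>_pos] mass_nonneg[of \<rho>]]
      by (simp add: tree_error_Leaf potential_def)
    then show ?thesis
      by (intro exI[of _ "Leaf False"]) simp
  next
    case False
    then have "tree_error (Leaf True) \<rho> = 0"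
      by (simp add: tree_error_def)
    moreover have "0 \<le> potential (replicate n None) 0 \<rho>"
      using mult_nonneg_nonneg[OF less_imp_le[OF \<theta>_pos] mass_nonneg] potential_ge by (rule order_trans)
    ultimately show ?thesis
      by (intro exI[of _ "Leaf True"]) simp
  qed
next
  case (Suc k)
  show ?case
  proof (cases "mass0 \<rho> \<le> \<theta> * mass \<rho>")
    case True
    then show ?thesis
      using potential_ge[of \<rho> "replicate n None" "Suc k"]
      by (intro exI[of _ "Leaf True"]) (simp add: tree_error_Leaf)
  next
    case False
    then obtain R where R: "R \<in> supports n" "u R \<noteq> 0" "subcube n \<rho> \<inter> subcube n R \<noteq> {}"
      "consistent_mass R \<rho> \<le> round_cost * mass \<rho>"
      using exists_cheap_zero_certificate[of \<rho>] by auto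
    then obtain x0 where x0: "x0 \<in> subcube n \<rho>" "x0 \<in> subcube n R"
      by blast
    obtain T where T: "dt_vars T \<subseteq> {i. i < n \<and> \<rho> ! i = None}"
      "dt_depth T \<le> unset_bits n \<rho> R + a * k" "tree_error T \<rho> \<le> potential R k \<rho>"
      using query_certificate[OF Suc.IH Suc.prems] by blast
    have "unset_bits n \<rho> R \<le> a"
      using unset_bits_le_supp_size u_supp_size[OF R(1,2)] by (rule le_trans)
    then have "dt_depth T \<le> a * Suc k"
      using T(2) by simp
    moreover have "potential R k \<rho> \<le> potential (replicate n None) (Suc k) \<rho>"
      using open_mass_le_consistent_mass[OF x0, of k] R(4)
      by (simp add: potential_def algebra_simps)
    ultimately show ?thesis
      using T by (meson order_trans)
  qed
qed

lemma tree_error_root: "tree_error T (replicate n None) = dt_error n p f T"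
proof -
  have "{x. dt_eval T x \<noteq> f x} \<inter> cube n = {x \<in> cube n. dt_eval T x \<noteq> f x}"
    by auto
  then show ?thesis
    unfolding tree_error_def dt_error_def mu_def subcube_replicate_None
    by (simp add: sum.inter_filter finite_cube)
qed

lemma open_mass_root: "open_mass (replicate n None) b (replicate n None) = 0"
proof -
  have "open_cover (replicate n None) b (replicate n None) y = 0" for y
    unfolding open_cover_def cover_def
    by (intro sum.neutral) (auto simp: unset_bits_replicate_None dest: w_supp_size)
  then show ?thesis
    by (simp add: open_mass_def cong: if_cong)
qed

lemma uncovered_mass_root:
  assumes "0 \<le> \<alpha>1"
    and "(1 - \<alpha>1) * mu_z n p f True (cube n) \<le> (\<Sum>s\<in>supports n. mu_z n p f True (subcube n s) * w s)"
  shows "uncovered_mass (replicate n None) \<le> \<alpha>1"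
proof -
  let ?S1 = "{x \<in> cube n. f x}"
  let ?M1 = "\<Sum>x\<in>?S1. mu_pt n p x" and ?W = "\<Sum>x\<in>?S1. mu_pt n p x * cover n w x"
  have "cube n \<inter> {x. f x = True} = ?S1"
    by auto
  then have mass1: "mu_z n p f True (cube n) = ?M1"
    unfolding mu_z_def by (simp add: mu_subset_cube)
  have "mu_z n p f True (subcube n s) = mu n p (?S1 \<inter> subcube n s)" for s
    unfolding mu_z_def using subcube_subset_cube by (intro arg_cong[where f = "mu n p"]) auto
  moreover have "?S1 \<inter> cube n = ?S1"
    by auto
  ultimately have covered: "(\<Sum>s\<in>supports n. mu_z n p f True (subcube n s) * w s) = ?W"
    by (simp add: sum_supports_mu_inter mult.commute)
  have "uncovered_mass (replicate n None) = (\<Sum>x\<in>?S1. mu_pt n p x * (1 - cover n w x))"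
    unfolding uncovered_mass_def subcube_replicate_None
    by (rule sum.inter_filter[symmetric, OF finite_cube])
  also have "\<dots> = ?M1 - ?W"
    by (simp add: right_diff_distrib sum_subtractf)
  finally have "uncovered_mass (replicate n None) \<le> \<alpha>1 * ?M1"
    using assms(2) mass1 covered by (simp add: algebra_simps)
  moreover have "?M1 \<le> 1"
  proof -
    have "?M1 \<le> (\<Sum>x\<in>cube n. mu_pt n p x)"
      by (rule sum_mono2) (auto simp: finite_cube point_mass_nonneg)
    then show ?thesis
      using mu_cube[of n p] by (simp add: mu_def)
  qed
  ultimately show ?thesis
    using mult_left_le[of ?M1 \<alpha>1] assms(1) by linarith
qed

lemma decision_tree_exists:
  assumes "0 \<le> \<alpha>1"
    and "(1 - \<alpha>1) * mu_z n p f True (cube n) \<le> (\<Sum>s\<in>supports n. mu_z n p f True (subcube n s) * w s)"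
  shows "\<exists>T. dt_vars T \<subseteq> {..<n} \<and> dt_depth T \<le> a * b
    \<and> dt_error n p f T \<le> \<theta> + \<alpha>1 + \<beta>1 + real b * (\<beta>1 + \<beta>0 / ((1 - \<alpha>0) * \<theta>))"
proof -
  have "mass (replicate n None) = 1"
    by (simp add: mass_eq_mu subcube_replicate_None mu_cube)
  moreover have "\<beta>1 * mass1 (replicate n None) \<le> \<beta>1"
    using mass1_le_mass[of "replicate n None"] \<beta>1_nonneg calculation by (simp add: mult_left_le)
  ultimately have "potential (replicate n None) b (replicate n None) \<le> \<theta> + \<alpha>1 + \<beta>1 + real b * round_cost"
    using uncovered_mass_root[OF assms] by (simp add: potential_def open_mass_root)
  moreover have "{i. i < n \<and> replicate n None ! i = None} = {..<n}"
    by auto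
  ultimately show ?thesis
    using decision_tree_potential[of "replicate n None" b] by (auto simp: tree_error_root round_cost_def)
qed

end

lemma error_bound_arith:
  fixes \<delta> \<alpha>0 \<beta>0 \<beta>1 :: real and b :: nat
  assumes "0 < \<delta>" "\<alpha>0 < 1" "0 \<le> \<beta>0" "0 \<le> \<beta>1"
  defines "\<theta> \<equiv> 1/4 + real b * \<delta>"
  shows "\<theta> + real b * (\<beta>1 + \<beta>0 / ((1 - \<alpha>0) * \<theta>))
    \<le> 1/4 + 4 * real b * (\<beta>1 + \<delta>) + \<beta>0 / ((1 - \<alpha>0) * \<delta>)"
proof -
  have "0 < \<theta>"
    using assms(1) by (simp add: \<theta>_def add_pos_nonneg)
  then have "real b / \<theta> \<le> 1 / \<delta>"
    using assms(1) by (simp add: \<theta>_def divide_simps)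
  then have "real b * (\<beta>0 / ((1 - \<alpha>0) * \<theta>)) \<le> \<beta>0 / ((1 - \<alpha>0) * \<delta>)"
    using mult_left_mono[of "real b / \<theta>" "1 / \<delta>" "\<beta>0 / (1 - \<alpha>0)"] assms(2,3)
    by (simp add: mult.commute[of "real b" \<beta>0])
  moreover have "\<theta> \<le> 1/4 + 4 * real b * \<delta>" "real b * \<beta>1 \<le> 4 * real b * \<beta>1"
    using assms(1,4) by (simp_all add: \<theta>_def)
  ultimately show ?thesis
    by (simp add: distrib_left)
qed

theorem mainTheorem11:
  fixes n :: nat and f :: "bool list \<Rightarrow> bool" and p :: "nat \<Rightarrow> real"
    and \<delta> \<alpha>0 \<beta>0 \<alpha>1 \<beta>1 :: real and a b :: nat
  assumes "\<delta> > 0"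
    and "0 \<le> \<alpha>0" and "\<alpha>0 < 1"
    and "0 \<le> \<beta>0" and "0 \<le> \<alpha>1" and "0 \<le> \<beta>1"
    and "prod_dist n p"
    and "feasible n p f \<alpha>0 \<beta>0 \<alpha>1 \<beta>1 a b"
  shows "\<exists>T. dt_vars T \<subseteq> {..<n} \<and> dt_depth T \<le> a * b \<and>
    dt_error n p f T \<le> 1/4 + \<alpha>1 + \<beta>1 + 4 * real b * (\<beta>1 + \<delta>) + \<beta>0 / ((1 - \<alpha>0) * \<delta>)"
proof -
  obtain u w where uw: "\<forall>s\<in>supports n. 0 \<le> u s \<and> 0 \<le> w s"
    "\<forall>s\<in>supports n. u s \<noteq> 0 \<longrightarrow> supp_size n s \<le> a"
    "\<forall>s\<in>supports n. w s \<noteq> 0 \<longrightarrow> supp_size n s \<le> b"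
    "\<forall>x\<in>cube n. \<not> f x \<longrightarrow> 1 - \<alpha>0 \<le> cover n u x"
    "\<forall>x\<in>cube n. f x \<longrightarrow> cover n u x \<le> \<beta>0"
    "\<forall>x\<in>cube n. cover n w x \<le> 1"
    "\<forall>x\<in>cube n. \<not> f x \<longrightarrow> cover n w x \<le> \<beta>1"
    and covered: "(1 - \<alpha>1) * mu_z n p f True (cube n) \<le> (\<Sum>s\<in>supports n. mu_z n p f True (subcube n s) * w s)"
    using assms(8) unfolding feasible_def cover_def by blast
  define \<theta> where "\<theta> = 1/4 + real b * \<delta>"
  have "0 < \<theta>"
    using assms(1) by (simp add: \<theta>_def add_pos_nonneg)
  then interpret feasible_weights n p f u w \<alpha>0 \<beta>0 \<beta>1 \<theta> a b
    using uw assms(3,4,6,7) by unfold_locales auto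
  obtain T where "dt_vars T \<subseteq> {..<n}" "dt_depth T \<le> a * b"
    "dt_error n p f T \<le> \<theta> + \<alpha>1 + \<beta>1 + real b * (\<beta>1 + \<beta>0 / ((1 - \<alpha>0) * \<theta>))"
    using decision_tree_exists[OF assms(5) covered] by blast
  with error_bound_arith[OF assms(1,3,4,6), of b] show ?thesis
    unfolding \<theta>_def by (intro exI[of _ T]) linarith
qed

end
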